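(* There exists a universal constant $C<\infty$ such that the following holds. Let $(a_{ijk})_{i,j\le n,k\le m}$ be real numbers, $T\subset\mathbb{R}^m$ a nonempty bounded set and $U\subset B_2^n$. Then for every $r>0$ there exists a decomposition $U=\bigcup_{i=1}^N U_i$ with $N\leq e^{Cr}$ such that for each $i$, \[ \sup_{x,x'\in U_i}\beta_{A,T}(x-x')\leq r^{-1/2}s_A(T). \]
   Context: $B_2^n$ is the Euclidean unit ball in $\mathbb{R}^n$. With $g_1,\dots,g_n,g_1',\dots,g_n'$ i.i.d. $\mathcal N(0,1)$: $\beta_{A,T}(x)=\mathbb{E}\sup_{t\in T}|\sum_{i,j,k}a_{ijk}g_ix_jt_k|$ for $x\in\mathbb{R}^n$, and $s_A(T)=\mathbb{E}\sup_{t\in T}|\sum_{i,j,k}a_{ijk}g_ig_j't_k|$. *)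

theory Defs
  imports "HOL-Probability.Probability"
begin

definition gauss_vec :: "nat \<Rightarrow> (nat \<Rightarrow> real) measure" where
  "gauss_vec n = PiM {..<n} (\<lambda>_. density lborel std_normal_density)"

definition betaAT :: "nat \<Rightarrow> nat \<Rightarrow> (nat \<Rightarrow> nat \<Rightarrow> nat \<Rightarrow> real) \<Rightarrow> (nat \<Rightarrow> real) set
    \<Rightarrow> (nat \<Rightarrow> real) \<Rightarrow> real" where
  "betaAT n m a T x = (\<integral>g. (SUP t\<in>T. \<bar>\<Sum>i<n. \<Sum>j<n. \<Sum>k<m. a i j k * g i * x j * t k\<bar>) \<partial>gauss_vec n)"

definition sAT :: "nat \<Rightarrow> nat \<Rightarrow> (nat \<Rightarrow> nat \<Rightarrow> nat \<Rightarrow> real) \<Rightarrow> (nat \<Rightarrow> real) set \<Rightarrow> real" where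
  "sAT n m a T = (\<integral>gg. (SUP t\<in>T. \<bar>\<Sum>i<n. \<Sum>j<n. \<Sum>k<m. a i j k * fst gg i * snd gg j * t k\<bar>)
      \<partial>(gauss_vec n \<Otimes>\<^sub>M gauss_vec n))"

end

theory Submission
  imports Defs
begin

text \<open>The map \<open>x \<mapsto> \<beta>\<^sub>A\<^sub>,\<^sub>T(x)\<close> is a seminorm on \<open>\<real>\<^sup>n\<close> and \<open>s\<^sub>A(T) = \<bbbE> \<beta>\<^sub>A\<^sub>,\<^sub>T(G)\<close> for a standard
  Gaussian vector \<open>G\<close>, so by Markov's inequality the set \<open>K = {\<beta>\<^sub>A\<^sub>,\<^sub>T \<le> 3 s\<^sub>A(T)}\<close> has Gaussian
  measure at least \<open>2/3\<close>. Let \<open>x\<^sub>1, \<dots>, x\<^sub>N \<in> B\<^sub>2\<^sup>n\<close> be \<open>\<delta>\<close>-separated for \<open>\<beta>\<^sub>A\<^sub>,\<^sub>T\<close>, where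
  \<open>\<delta> = r\<^sup>-\<^sup>1\<^sup>/\<^sup>2 s\<^sub>A(T) / 2\<close>, and put \<open>\<theta> = 12 \<surd>r\<close>, so that \<open>\<theta> \<delta> = 6 s\<^sub>A(T)\<close>. Then the translates
  \<open>K - \<theta> x\<^sub>i\<close> are pairwise disjoint, and so are the \<open>K + \<theta> x\<^sub>i\<close>. By the Cameron--Martin formula the
  Gaussian measures of \<open>K - \<theta> x\<^sub>i\<close> and \<open>K + \<theta> x\<^sub>i\<close> add up to at least
  \<open>2 exp (-\<theta>\<^sup>2/2) \<gamma>(K)\<close>, hence \<open>N \<le> 3/2 exp (72 r)\<close> (dual Sudakov inequality). A maximal
  separated family is a \<open>\<delta>\<close>-net, and its \<open>\<delta>\<close>-neighbourhoods decompose \<open>U\<close> into at most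
  \<open>exp (216 r)\<close> pieces of \<open>\<beta>\<^sub>A\<^sub>,\<^sub>T\<close>-diameter at most \<open>2 \<delta>\<close>.\<close>

section \<open>Standard Gaussian vectors and their translates\<close>

lemma prob_space_std_normal_distribution: "prob_space std_normal_distribution"
  using real_dist_normal_dist by (simp add: real_distribution_def)

lemma prob_space_gauss_vec: "prob_space (gauss_vec n)"
  unfolding gauss_vec_def by (intro prob_space_PiM prob_space_std_normal_distribution)

lemma space_gauss_vec: "space (gauss_vec n) = PiE {..<n} (\<lambda>_. UNIV)"
  unfolding gauss_vec_def by (simp add: space_PiM)

lemma measurable_gauss_vec_component[measurable]: "(\<lambda>g. g i) \<in> borel_measurable (gauss_vec n)"
proof (cases "i < n")
  case True
  have "(\<lambda>g. g i) \<in> measurable (gauss_vec n) std_normal_distribution"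
    unfolding gauss_vec_def by (rule measurable_component_singleton) (simp add: True)
  then show ?thesis
    by (simp add: measurable_cong_sets[OF refl sets_density])
next
  case False
  then have "g i = undefined" if "g \<in> space (gauss_vec n)" for g
    using that by (auto simp: space_gauss_vec PiE_def extensional_def)
  then show ?thesis
    by (subst measurable_cong[where g = "\<lambda>_. undefined"]) auto
qed

lemma integrable_gauss_vec_abs_component:
  assumes "i < n"
  shows "integrable (gauss_vec n) (\<lambda>g. \<bar>g i\<bar>)"
proof -
  have "distr (gauss_vec n) std_normal_distribution (\<lambda>g. g i) = std_normal_distribution"
    unfolding gauss_vec_def using assms prob_space_std_normal_distribution
    by (intro distr_PiM_component) auto
  moreover have "integrable std_normal_distribution (\<lambda>x. \<bar>x\<bar>)"
    using integrable_abs[OF integrable_std_normal_distribution_moment[of 1]] by simp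
  ultimately have "integrable (distr (gauss_vec n) std_normal_distribution (\<lambda>g. g i)) abs"
    by simp
  then show ?thesis
    by (subst (asm) integrable_distr_eq)
       (auto simp: measurable_cong_sets[OF refl sets_density])
qed

lemma emeasure_std_normal_translate:
  assumes [measurable]: "A \<in> sets borel"
  shows "emeasure std_normal_distribution {x. x + c \<in> A}
    = emeasure (density lborel (normal_density c 1)) A"
proof -
  have "emeasure std_normal_distribution {x. x + c \<in> A}
      = (\<integral>\<^sup>+x. ennreal (normal_density c 1 (c + x)) * indicator A (c + x) \<partial>lborel)"
    by (subst emeasure_density)
       (auto intro!: nn_integral_cong simp: normal_density_def indicator_def add.commute)
  also have "\<dots> = (\<integral>\<^sup>+x. ennreal (normal_density c 1 x) * indicator A x \<partial>lborel)"
    using nn_integral_real_affine[of "\<lambda>x. ennreal (normal_density c 1 x) * indicator A x" 1 c]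
    by simp
  also have "\<dots> = emeasure (density lborel (normal_density c 1)) A"
    by (subst emeasure_density) (auto simp: mult.commute)
  finally show ?thesis .
qed

lemma emeasure_std_normal_tilt:
  assumes [measurable]: "A \<in> sets borel"
  shows "(\<integral>\<^sup>+x. ennreal (exp (c * x - c\<^sup>2 / 2)) * indicator A x \<partial>std_normal_distribution)
    = emeasure (density lborel (normal_density c 1)) A"
proof -
  have tilt: "std_normal_density x * exp (c * x - c\<^sup>2 / 2) = normal_density c 1 x" for x
  proof -
    have "exp (- x\<^sup>2 / 2) * exp (c * x - c\<^sup>2 / 2) = exp (- (x - c)\<^sup>2 / 2)"
      by (subst exp_add[symmetric]) (simp add: power2_eq_square algebra_simps)
    then show ?thesis by (simp add: normal_density_def)
  qed
  have "(\<integral>\<^sup>+x. ennreal (exp (c * x - c\<^sup>2 / 2)) * indicator A x \<partial>std_normal_distribution)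
      = (\<integral>\<^sup>+x. ennreal (normal_density c 1 x) * indicator A x \<partial>lborel)"
    by (subst nn_integral_density)
       (auto intro!: nn_integral_cong simp: tilt mult.assoc[symmetric] ennreal_mult'[symmetric])
  also have "\<dots> = emeasure (density lborel (normal_density c 1)) A"
    by (subst emeasure_density) (auto simp: mult.commute)
  finally show ?thesis .
qed

lemma vimage_translate_PiE:
  "(\<lambda>h. restrict (\<lambda>i. h i + a i) I) -` PiE I A \<inter> PiE I (\<lambda>_. UNIV)
    = PiE I (\<lambda>i. {x. x + a i \<in> A i})"
  by (auto simp: restrict_PiE_iff PiE_iff)

lemma measurable_gauss_vec_translate:
  "(\<lambda>h. restrict (\<lambda>i. h i + a i) {..<n}) \<in> measurable (gauss_vec n) (gauss_vec n)"
  unfolding gauss_vec_def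
  by (rule measurable_restrict)
     (simp add: measurable_cong_sets[OF refl sets_density] flip: gauss_vec_def)

context
  fixes n :: nat and a :: "nat \<Rightarrow> real"
begin

abbreviation shifted_gauss_vec :: "(nat \<Rightarrow> real) measure" where
  "shifted_gauss_vec \<equiv> PiM {..<n} (\<lambda>i. density lborel (normal_density (a i) 1))"

lemma product_sigma_finite_shifted_normals:
  "product_sigma_finite (\<lambda>i. density lborel (normal_density (a i) 1))"
  by (simp add: product_sigma_finite_def prob_space_imp_sigma_finite prob_space_normal_density)

lemma sets_shifted_gauss_vec: "sets shifted_gauss_vec = sets (gauss_vec n)"
  unfolding gauss_vec_def by (intro sets_PiM_cong) auto

lemma distr_gauss_vec_translate:
  "distr (gauss_vec n) (gauss_vec n) (\<lambda>h. restrict (\<lambda>i. h i + a i) {..<n}) = shifted_gauss_vec"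
proof (rule product_sigma_finite.PiM_eqI[OF product_sigma_finite_shifted_normals])
  interpret std: product_sigma_finite "\<lambda>_::nat. std_normal_distribution"
    unfolding product_sigma_finite_def
    using prob_space_imp_sigma_finite[OF prob_space_std_normal_distribution] by blast
  show "sets (distr (gauss_vec n) (gauss_vec n) (\<lambda>h. restrict (\<lambda>i. h i + a i) {..<n}))
      = sets shifted_gauss_vec"
    by (simp only: sets_distr sets_shifted_gauss_vec)
  fix A assume "\<And>i. i \<in> {..<n} \<Longrightarrow> A i \<in> sets (density lborel (normal_density (a i) 1))"
  then have [measurable]: "i < n \<Longrightarrow> A i \<in> sets borel" for i by simp
  have "PiE {..<n} A \<in> sets (gauss_vec n)"
    unfolding gauss_vec_def by (auto intro!: sets_PiM_I_finite)
  then have "emeasure (distr (gauss_vec n) (gauss_vec n) (\<lambda>h. restrict (\<lambda>i. h i + a i) {..<n}))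
        (PiE {..<n} A)
      = emeasure (gauss_vec n) ((\<lambda>h. restrict (\<lambda>i. h i + a i) {..<n}) -` PiE {..<n} A \<inter> space (gauss_vec n))"
    using measurable_gauss_vec_translate by (rule emeasure_distr[rotated])
  also have "(\<lambda>h. restrict (\<lambda>i. h i + a i) {..<n}) -` PiE {..<n} A \<inter> space (gauss_vec n)
      = PiE {..<n} (\<lambda>i. {x. x + a i \<in> A i})"
    unfolding space_gauss_vec by (rule vimage_translate_PiE)
  also have "emeasure (gauss_vec n) \<dots> = (\<Prod>i<n. emeasure std_normal_distribution {x. x + a i \<in> A i})"
    unfolding gauss_vec_def by (subst std.emeasure_PiM) auto
  also have "\<dots> = (\<Prod>i\<in>{..<n}. emeasure (density lborel (normal_density (a i) 1)) (A i))"
    by (intro prod.cong) (simp_all add: emeasure_std_normal_translate)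
  finally show "emeasure (distr (gauss_vec n) (gauss_vec n) (\<lambda>h. restrict (\<lambda>i. h i + a i) {..<n}))
      (PiE {..<n} A) = (\<Prod>i\<in>{..<n}. emeasure (density lborel (normal_density (a i) 1)) (A i))" .
qed simp



lemma density_gauss_vec_tilt:
  "density (gauss_vec n) (\<lambda>h. \<Prod>i<n. ennreal (exp (a i * h i - (a i)\<^sup>2 / 2))) = shifted_gauss_vec"
proof (rule product_sigma_finite.PiM_eqI[OF product_sigma_finite_shifted_normals])
  interpret std: product_sigma_finite "\<lambda>_::nat. std_normal_distribution"
    unfolding product_sigma_finite_def
    using prob_space_imp_sigma_finite[OF prob_space_std_normal_distribution] by blast
  show "sets (density (gauss_vec n) (\<lambda>h. \<Prod>i<n. ennreal (exp (a i * h i - (a i)\<^sup>2 / 2))))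
      = sets shifted_gauss_vec"
    by (simp only: sets_density sets_shifted_gauss_vec)
  fix A assume "\<And>i. i \<in> {..<n} \<Longrightarrow> A i \<in> sets (density lborel (normal_density (a i) 1))"
  then have [measurable]: "i < n \<Longrightarrow> A i \<in> sets borel" for i by simp
  have "PiE {..<n} A \<in> sets (gauss_vec n)"
    unfolding gauss_vec_def by (auto intro!: sets_PiM_I_finite)
  then have "emeasure (density (gauss_vec n) (\<lambda>h. \<Prod>i<n. ennreal (exp (a i * h i - (a i)\<^sup>2 / 2))))
        (PiE {..<n} A)
      = (\<integral>\<^sup>+h. (\<Prod>i<n. ennreal (exp (a i * h i - (a i)\<^sup>2 / 2))) * indicator (PiE {..<n} A) h \<partial>gauss_vec n)"
    by (rule emeasure_density[rotated]) measurable
  also have "\<dots> = (\<integral>\<^sup>+h. (\<Prod>i<n. ennreal (exp (a i * h i - (a i)\<^sup>2 / 2)) * indicator (A i) (h i))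
      \<partial>gauss_vec n)"
    by (intro nn_integral_cong)
       (simp add: space_gauss_vec prod.distrib indicator_def PiE_iff)
  also have "\<dots> = (\<Prod>i<n. \<integral>\<^sup>+x. ennreal (exp (a i * x - (a i)\<^sup>2 / 2)) * indicator (A i) x
      \<partial>std_normal_distribution)"
    unfolding gauss_vec_def by (rule std.product_nn_integral_prod) auto
  also have "\<dots> = (\<Prod>i\<in>{..<n}. emeasure (density lborel (normal_density (a i) 1)) (A i))"
    by (intro prod.cong) (simp_all add: emeasure_std_normal_tilt)
  finally show "emeasure (density (gauss_vec n) (\<lambda>h. \<Prod>i<n. ennreal (exp (a i * h i - (a i)\<^sup>2 / 2))))
      (PiE {..<n} A) = (\<Prod>i\<in>{..<n}. emeasure (density lborel (normal_density (a i) 1)) (A i))" .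
qed simp

lemma nn_integral_gauss_vec_translate:
  assumes [measurable]: "f \<in> borel_measurable (gauss_vec n)"
  shows "(\<integral>\<^sup>+h. f (restrict (\<lambda>i. h i + a i) {..<n}) \<partial>gauss_vec n)
    = (\<integral>\<^sup>+h. ennreal (exp ((\<Sum>i<n. a i * h i) - (\<Sum>i<n. (a i)\<^sup>2) / 2)) * f h \<partial>gauss_vec n)"
proof -
  have "(\<integral>\<^sup>+h. f (restrict (\<lambda>i. h i + a i) {..<n}) \<partial>gauss_vec n)
      = (\<integral>\<^sup>+h. f h \<partial>distr (gauss_vec n) (gauss_vec n) (\<lambda>h. restrict (\<lambda>i. h i + a i) {..<n}))"
    using measurable_gauss_vec_translate by (rule nn_integral_distr[symmetric]) simp
  also have "\<dots> = (\<integral>\<^sup>+h. f h \<partial>density (gauss_vec n) (\<lambda>h. \<Prod>i<n. ennreal (exp (a i * h i - (a i)\<^sup>2 / 2))))"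
    by (simp only: distr_gauss_vec_translate density_gauss_vec_tilt)
  also have "\<dots> = (\<integral>\<^sup>+h. (\<Prod>i<n. ennreal (exp (a i * h i - (a i)\<^sup>2 / 2))) * f h \<partial>gauss_vec n)"
    by (rule nn_integral_density) measurable
  also have "\<dots> = (\<integral>\<^sup>+h. ennreal (exp ((\<Sum>i<n. a i * h i) - (\<Sum>i<n. (a i)\<^sup>2) / 2)) * f h \<partial>gauss_vec n)"
  proof -
    have "(\<Sum>i<n. a i * h i) - (\<Sum>i<n. (a i)\<^sup>2) / 2 = (\<Sum>i<n. a i * h i - (a i)\<^sup>2 / 2)" for h
      by (simp add: sum_subtractf sum_divide_distrib)
    then show ?thesis
      by (simp add: prod_ennreal exp_sum)
  qed
  finally show ?thesis .
qed

end

lemma exp_sum_opposite_ge: "2 * exp (- (w::real)) \<le> exp ((u::real) - w) + exp (- u - w)"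
proof -
  have "2 \<le> exp u + exp (- u)"
    using exp_ge_add_one_self[of u] exp_ge_add_one_self[of "- u"] by linarith
  then have "2 * exp (- w) \<le> (exp u + exp (- u)) * exp (- w)" by simp
  also have "\<dots> = exp (u - w) + exp (- u - w)" by (simp add: distrib_right flip: exp_add)
  finally show ?thesis .
qed

lemma gauss_vec_opposite_translates_ge:
  assumes [measurable]: "K \<in> sets (gauss_vec n)"
  shows "ennreal (2 * exp (- (\<Sum>i<n. (b i)\<^sup>2) / 2)) * emeasure (gauss_vec n) K
    \<le> (\<integral>\<^sup>+h. indicator K (restrict (\<lambda>i. h i + b i) {..<n}) \<partial>gauss_vec n)
      + (\<integral>\<^sup>+h. indicator K (restrict (\<lambda>i. h i - b i) {..<n}) \<partial>gauss_vec n)"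
proof -
  define u where "u h = (\<Sum>i<n. b i * h i)" for h :: "nat \<Rightarrow> real"
  define w where "w = (\<Sum>i<n. (b i)\<^sup>2) / 2"
  have "ennreal (2 * exp (- w)) * emeasure (gauss_vec n) K
      = (\<integral>\<^sup>+h. ennreal (2 * exp (- w)) * indicator K h \<partial>gauss_vec n)"
    by (simp add: nn_integral_cmult_indicator)
  also have "\<dots> \<le> (\<integral>\<^sup>+h. (ennreal (exp (u h - w)) + ennreal (exp (- u h - w))) * indicator K h \<partial>gauss_vec n)"
    by (intro nn_integral_mono mult_right_mono)
       (simp_all add: exp_sum_opposite_ge flip: ennreal_plus)
  also have "\<dots> = (\<integral>\<^sup>+h. ennreal (exp (u h - w)) * indicator K h \<partial>gauss_vec n)
      + (\<integral>\<^sup>+h. ennreal (exp (- u h - w)) * indicator K h \<partial>gauss_vec n)"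
    by (simp add: distrib_right nn_integral_add u_def)
  also have "\<dots> = (\<integral>\<^sup>+h. indicator K (restrict (\<lambda>i. h i + b i) {..<n}) \<partial>gauss_vec n)
      + (\<integral>\<^sup>+h. indicator K (restrict (\<lambda>i. h i - b i) {..<n}) \<partial>gauss_vec n)"
    using nn_integral_gauss_vec_translate[of "indicator K" n b]
      nn_integral_gauss_vec_translate[of "indicator K" n "\<lambda>i. - b i"]
    by (simp add: u_def w_def sum_negf)
  finally show ?thesis
    by (simp add: w_def)
qed

lemma gauss_vec_translates_packing:
  fixes A :: "(nat \<Rightarrow> real) set"
  assumes "finite A" and K[measurable]: "K \<in> sets (gauss_vec n)"
    and norm_le: "\<And>b. b \<in> A \<Longrightarrow> (\<Sum>i<n. (b i)\<^sup>2) \<le> R"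
    and disjoint: "\<And>h \<sigma> b c. h \<in> space (gauss_vec n) \<Longrightarrow> \<sigma> \<in> {-1, 1} \<Longrightarrow> b \<in> A \<Longrightarrow> c \<in> A \<Longrightarrow>
        restrict (\<lambda>i. h i + \<sigma> * b i) {..<n} \<in> K \<Longrightarrow> restrict (\<lambda>i. h i + \<sigma> * c i) {..<n} \<in> K \<Longrightarrow> b = c"
  shows "real (card A) * exp (- R / 2) * measure (gauss_vec n) K \<le> 1"
proof -
  interpret prob_space "gauss_vec n" by (rule prob_space_gauss_vec)
  define hit where "hit \<sigma> b h = (indicator K (restrict (\<lambda>i. h i + \<sigma> * b i) {..<n}) :: ennreal)"
    for \<sigma> b h
  have hit_measurable[measurable]: "hit \<sigma> b \<in> borel_measurable (gauss_vec n)" for \<sigma> b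
    unfolding hit_def using measurable_gauss_vec_translate by measurable
  have at_most_one_hit: "(\<Sum>b\<in>A. hit \<sigma> b h) \<le> 1"
    if "h \<in> space (gauss_vec n)" "\<sigma> \<in> {-1, 1}" for h \<sigma>
  proof -
    have "card (A \<inter> {b. restrict (\<lambda>i. h i + \<sigma> * b i) {..<n} \<in> K}) \<le> Suc 0"
      using \<open>finite A\<close> disjoint[OF that] by (subst card_le_Suc0_iff_eq) auto
    then show ?thesis
      using \<open>finite A\<close> by (simp add: hit_def indicator_def of_bool_def[symmetric])
  qed
  have "(\<Sum>b\<in>A. ennreal (2 * exp (- R / 2)) * emeasure (gauss_vec n) K)
      \<le> (\<Sum>b\<in>A. (\<integral>\<^sup>+h. hit 1 b h \<partial>gauss_vec n) + (\<integral>\<^sup>+h. hit (-1) b h \<partial>gauss_vec n))"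
  proof (intro sum_mono)
    fix b assume "b \<in> A"
    have "ennreal (2 * exp (- R / 2)) * emeasure (gauss_vec n) K
        \<le> ennreal (2 * exp (- (\<Sum>i<n. (b i)\<^sup>2) / 2)) * emeasure (gauss_vec n) K"
      using norm_le[OF \<open>b \<in> A\<close>] by (intro mult_right_mono ennreal_leI) simp_all
    also have "\<dots> \<le> (\<integral>\<^sup>+h. hit 1 b h \<partial>gauss_vec n) + (\<integral>\<^sup>+h. hit (-1) b h \<partial>gauss_vec n)"
      using gauss_vec_opposite_translates_ge[OF K, of b] by (simp add: hit_def)
    finally show "ennreal (2 * exp (- R / 2)) * emeasure (gauss_vec n) K
        \<le> (\<integral>\<^sup>+h. hit 1 b h \<partial>gauss_vec n) + (\<integral>\<^sup>+h. hit (-1) b h \<partial>gauss_vec n)" .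
  qed
  also have "\<dots> = (\<integral>\<^sup>+h. (\<Sum>b\<in>A. hit 1 b h) + (\<Sum>b\<in>A. hit (-1) b h) \<partial>gauss_vec n)"
    by (simp add: nn_integral_add nn_integral_sum sum.distrib)
  also have "\<dots> \<le> (\<integral>\<^sup>+h. 2 \<partial>gauss_vec n)"
    using at_most_one_hit[of _ 1] at_most_one_hit[of _ "-1"]
    by (intro nn_integral_mono) (metis add_mono one_add_one insertI1 insertI2 singletonI)
  also have "\<dots> = 2"
    by (simp add: emeasure_space_1)
  finally have "of_nat (card A) * ennreal (2 * exp (- R / 2)) * emeasure (gauss_vec n) K \<le> 2"
    by (simp add: mult.assoc)
  then have "ennreal (real (card A) * (2 * exp (- R / 2)) * measure (gauss_vec n) K) \<le> ennreal 2"
    by (simp add: emeasure_eq_measure ennreal_of_nat_eq_real_of_nat flip: ennreal_mult')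
  then show ?thesis
    by (subst (asm) ennreal_le_iff) auto
qed

section \<open>The supremum of a pairing over a bounded set\<close>

definition sup_pairing :: "nat \<Rightarrow> (nat \<Rightarrow> real) set \<Rightarrow> (nat \<Rightarrow> real) \<Rightarrow> real" where
  "sup_pairing m T c = (SUP t\<in>T. \<bar>\<Sum>k<m. c k * t k\<bar>)"

definition rat_vec :: "rat list \<Rightarrow> nat \<Rightarrow> real" where
  "rat_vec qs k = (if k < length qs then of_rat (qs ! k) else 0)"

lemma rat_vec_approx:
  assumes "0 < e"
  obtains qs where "\<And>k. k < m \<Longrightarrow> \<bar>c k - rat_vec qs k\<bar> < e"
proof -
  have "\<forall>k. \<exists>q::rat. c k - e < of_rat q \<and> of_rat q < c k + e"
    using assms by (intro allI of_rat_dense) simp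
  then obtain q where q: "\<And>k. c k - e < of_rat (q k) \<and> of_rat (q k) < c k + e"
    by metis
  have "\<bar>c k - rat_vec (map q [0..<m]) k\<bar> < e" if "k < m" for k
    using q[of k] that by (simp add: rat_vec_def abs_less_iff)
  then show ?thesis by (rule that)
qed

locale bounded_test_set =
  fixes m :: nat and T :: "(nat \<Rightarrow> real) set" and M :: real
  assumes nonempty: "T \<noteq> {}"
    and bound_nonneg: "0 \<le> M"
    and bound: "\<And>t k. t \<in> T \<Longrightarrow> k < m \<Longrightarrow> \<bar>t k\<bar> \<le> M"
begin

lemma abs_pairing_le: "t \<in> T \<Longrightarrow> \<bar>\<Sum>k<m. c k * t k\<bar> \<le> M * (\<Sum>k<m. \<bar>c k\<bar>)"
  unfolding sum_distrib_left
  by (rule order.trans[OF sum_abs], rule sum_mono)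
     (simp add: abs_mult mult.commute[of M] mult_left_mono bound)

lemma sup_pairing_upper: "t \<in> T \<Longrightarrow> \<bar>\<Sum>k<m. c k * t k\<bar> \<le> sup_pairing m T c"
  unfolding sup_pairing_def using abs_pairing_le by (intro cSUP_upper bdd_aboveI2) auto

lemma sup_pairing_least: "(\<And>t. t \<in> T \<Longrightarrow> \<bar>\<Sum>k<m. c k * t k\<bar> \<le> B) \<Longrightarrow> sup_pairing m T c \<le> B"
  unfolding sup_pairing_def by (rule cSUP_least[OF nonempty])

lemma sup_pairing_nonneg: "0 \<le> sup_pairing m T c"
  using nonempty sup_pairing_upper by (meson abs_ge_zero all_not_in_conv order_trans)

lemma sup_pairing_le_l1: "sup_pairing m T c \<le> M * (\<Sum>k<m. \<bar>c k\<bar>)"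
  by (intro sup_pairing_least abs_pairing_le)

lemma sup_pairing_add: "sup_pairing m T (\<lambda>k. c k + d k) \<le> sup_pairing m T c + sup_pairing m T d"
proof (rule sup_pairing_least)
  fix t assume "t \<in> T"
  have "\<bar>\<Sum>k<m. (c k + d k) * t k\<bar> \<le> \<bar>\<Sum>k<m. c k * t k\<bar> + \<bar>\<Sum>k<m. d k * t k\<bar>"
    by (simp add: distrib_right sum.distrib abs_triangle_ineq)
  then show "\<bar>\<Sum>k<m. (c k + d k) * t k\<bar> \<le> sup_pairing m T c + sup_pairing m T d"
    using sup_pairing_upper[OF \<open>t \<in> T\<close>, of c] sup_pairing_upper[OF \<open>t \<in> T\<close>, of d] by linarith
qed

lemma sup_pairing_lipschitz: "sup_pairing m T c \<le> sup_pairing m T d + M * (\<Sum>k<m. \<bar>c k - d k\<bar>)"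
  using sup_pairing_add[of d "\<lambda>k. c k - d k"] sup_pairing_le_l1[of "\<lambda>k. c k - d k"] by simp

lemma sup_pairing_scale: "sup_pairing m T (\<lambda>k. r * c k) = \<bar>r\<bar> * sup_pairing m T c"
proof -
  have le: "sup_pairing m T (\<lambda>k. r * c k) \<le> \<bar>r\<bar> * sup_pairing m T c" for r c
  proof (rule sup_pairing_least)
    fix t assume "t \<in> T"
    then show "\<bar>\<Sum>k<m. r * c k * t k\<bar> \<le> \<bar>r\<bar> * sup_pairing m T c"
      using sup_pairing_upper[of t c]
      by (simp add: mult.assoc abs_mult mult_left_mono flip: sum_distrib_left)
  qed
  show ?thesis
  proof (cases "r = 0")
    case True
    then show ?thesis using le[of 0 c] sup_pairing_nonneg[of "\<lambda>k. 0 * c k"] by simp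
  next
    case False
    then have "\<bar>r\<bar> * sup_pairing m T c \<le> \<bar>r\<bar> * (\<bar>1 / r\<bar> * sup_pairing m T (\<lambda>k. r * c k))"
      using le[of "1 / r" "\<lambda>k. r * c k"] by (intro mult_left_mono) simp_all
    with False le[of r c] show ?thesis by (simp add: abs_mult)
  qed
qed

text \<open>Lipschitz extension from the countable set of rational vectors; this is what makes
  \<open>sup_pairing\<close> measurable although \<open>T\<close> may be uncountable.\<close>

lemma sup_pairing_eq_INF_rat_vec:
  "sup_pairing m T c = (INF qs. sup_pairing m T (rat_vec qs) + M * (\<Sum>k<m. \<bar>c k - rat_vec qs k\<bar>))"
proof (rule antisym)
  show "sup_pairing m T c \<le> (INF qs. sup_pairing m T (rat_vec qs) + M * (\<Sum>k<m. \<bar>c k - rat_vec qs k\<bar>))"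
    by (rule cINF_greatest) (auto intro: sup_pairing_lipschitz)
  show "(INF qs. sup_pairing m T (rat_vec qs) + M * (\<Sum>k<m. \<bar>c k - rat_vec qs k\<bar>)) \<le> sup_pairing m T c"
  proof (rule field_le_epsilon)
    fix e :: real assume "0 < e"
    define d where "d = e / (2 * M * m + 1)"
    have "2 * M * m + 1 > 0" using bound_nonneg by (simp add: add_nonneg_pos)
    then have "0 < d" using \<open>0 < e\<close> by (simp add: d_def)
    then obtain qs where qs: "\<And>k. k < m \<Longrightarrow> \<bar>c k - rat_vec qs k\<bar> < d"
      using rat_vec_approx[where m = m and c = c] by blast
    have dist: "(\<Sum>k<m. \<bar>c k - rat_vec qs k\<bar>) \<le> m * d"
      using sum_mono[of "{..<m}" _ "\<lambda>_. d"] qs by (simp add: less_imp_le)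
    have "(INF qs. sup_pairing m T (rat_vec qs) + M * (\<Sum>k<m. \<bar>c k - rat_vec qs k\<bar>))
        \<le> sup_pairing m T (rat_vec qs) + M * (\<Sum>k<m. \<bar>c k - rat_vec qs k\<bar>)"
      by (rule cINF_lower) (auto intro!: bdd_belowI2[where m = "sup_pairing m T c"] sup_pairing_lipschitz)
    also have "\<dots> \<le> sup_pairing m T c + 2 * M * (\<Sum>k<m. \<bar>c k - rat_vec qs k\<bar>)"
      using sup_pairing_lipschitz[of "rat_vec qs" c] by (simp add: abs_minus_commute)
    also have "\<dots> \<le> sup_pairing m T c + (2 * M * m + 1) * d"
      using mult_left_mono[OF dist, of "2 * M"] bound_nonneg \<open>0 < d\<close> by (simp add: algebra_simps)
    also have "\<dots> = sup_pairing m T c + e"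
      using \<open>2 * M * m + 1 > 0\<close> by (simp add: d_def)
    finally show "(INF qs. sup_pairing m T (rat_vec qs) + M * (\<Sum>k<m. \<bar>c k - rat_vec qs k\<bar>))
        \<le> sup_pairing m T c + e" .
  qed
qed

lemma borel_measurable_sup_pairing[measurable]:
  assumes [measurable]: "\<And>k. c k \<in> borel_measurable N"
  shows "(\<lambda>x. sup_pairing m T (\<lambda>k. c k x)) \<in> borel_measurable N"
  by (subst sup_pairing_eq_INF_rat_vec) measurable

end

section \<open>The seminorm \<open>\<beta>\<^sub>A\<^sub>,\<^sub>T\<close>\<close>

definition contraction ::
  "nat \<Rightarrow> (nat \<Rightarrow> nat \<Rightarrow> nat \<Rightarrow> real) \<Rightarrow> (nat \<Rightarrow> real) \<Rightarrow> (nat \<Rightarrow> real) \<Rightarrow> nat \<Rightarrow> real" where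
  "contraction n a g y k = (\<Sum>i<n. \<Sum>j<n. a i j k * g i * y j)"

lemma triple_sum_eq_pairing_contraction:
  "(\<Sum>i<n. \<Sum>j<n. \<Sum>k<m. a i j k * g i * y j * t k) = (\<Sum>k<m. contraction n a g y k * t k)"
proof -
  have "(\<Sum>i<n. \<Sum>j<n. \<Sum>k<m. a i j k * g i * y j * t k) = (\<Sum>i<n. \<Sum>k<m. \<Sum>j<n. a i j k * g i * y j * t k)"
    by (intro sum.cong refl sum.swap)
  also have "\<dots> = (\<Sum>k<m. \<Sum>i<n. \<Sum>j<n. a i j k * g i * y j * t k)"
    by (rule sum.swap)
  finally show ?thesis
    by (simp add: contraction_def sum_distrib_right)
qed

lemma betaAT_eq_integral:
  "betaAT n m a T y = (\<integral>g. sup_pairing m T (contraction n a g y) \<partial>gauss_vec n)"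
  by (simp add: betaAT_def sup_pairing_def triple_sum_eq_pairing_contraction)

lemma sAT_eq_integral:
  "sAT n m a T
    = (\<integral>gg. sup_pairing m T (contraction n a (fst gg) (snd gg)) \<partial>(gauss_vec n \<Otimes>\<^sub>M gauss_vec n))"
  by (simp add: sAT_def sup_pairing_def triple_sum_eq_pairing_contraction)

lemma contraction_add:
  "contraction n a g (\<lambda>j. y j + z j) = (\<lambda>k. contraction n a g y k + contraction n a g z k)"
  by (simp add: contraction_def distrib_left sum.distrib fun_eq_iff)

lemma contraction_scale: "contraction n a g (\<lambda>j. r * y j) = (\<lambda>k. r * contraction n a g y k)"
  by (simp add: contraction_def sum_distrib_left mult_ac fun_eq_iff)

lemma contraction_cong: "(\<And>j. j < n \<Longrightarrow> y j = z j) \<Longrightarrow> contraction n a g y = contraction n a g z"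
  by (simp add: contraction_def fun_eq_iff)

lemma abs_contraction_le:
  "\<bar>contraction n a g y k\<bar> \<le> (\<Sum>i<n. \<Sum>j<n. \<bar>a i j k\<bar> * \<bar>y j\<bar> * \<bar>g i\<bar>)"
  unfolding contraction_def
  by (rule order.trans[OF sum_abs], rule sum_mono, rule order.trans[OF sum_abs])
     (simp add: abs_mult mult_ac)

locale gauss_tensor = bounded_test_set +
  fixes n :: nat and a :: "nat \<Rightarrow> nat \<Rightarrow> nat \<Rightarrow> real"
begin

abbreviation \<gamma> :: "(nat \<Rightarrow> real) measure" where "\<gamma> \<equiv> gauss_vec n"
abbreviation \<beta> :: "(nat \<Rightarrow> real) \<Rightarrow> real" where "\<beta> \<equiv> betaAT n m a T"
abbreviation sA :: real where "sA \<equiv> sAT n m a T"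

lemma borel_measurable_sup_pairing_contraction[measurable]:
  "(\<lambda>g. sup_pairing m T (contraction n a g y)) \<in> borel_measurable \<gamma>"
  unfolding contraction_def by measurable

lemma integrable_sup_pairing_contraction:
  "integrable \<gamma> (\<lambda>g. sup_pairing m T (contraction n a g y))"
proof (rule Bochner_Integration.integrable_bound)
  show "integrable \<gamma> (\<lambda>g. M * (\<Sum>k<m. \<Sum>i<n. \<Sum>j<n. \<bar>a i j k\<bar> * \<bar>y j\<bar> * \<bar>g i\<bar>))"
    by (intro Bochner_Integration.integrable_mult_right Bochner_Integration.integrable_sum
        integrable_gauss_vec_abs_component) simp
  have "sup_pairing m T (contraction n a g y) \<le> M * (\<Sum>k<m. \<Sum>i<n. \<Sum>j<n. \<bar>a i j k\<bar> * \<bar>y j\<bar> * \<bar>g i\<bar>)"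
    for g
    by (rule order.trans[OF sup_pairing_le_l1])
       (intro mult_left_mono sum_mono abs_contraction_le bound_nonneg)
  then show "AE g in \<gamma>. norm (sup_pairing m T (contraction n a g y))
      \<le> norm (M * (\<Sum>k<m. \<Sum>i<n. \<Sum>j<n. \<bar>a i j k\<bar> * \<bar>y j\<bar> * \<bar>g i\<bar>))"
    using sup_pairing_nonneg by (intro AE_I2) (smt (verit) real_norm_def)
qed simp

lemma betaAT_nonneg: "0 \<le> \<beta> y"
  unfolding betaAT_eq_integral by (intro integral_nonneg_AE AE_I2 sup_pairing_nonneg)

lemma betaAT_add: "\<beta> (\<lambda>j. y j + z j) \<le> \<beta> y + \<beta> z"
proof -
  have "\<beta> (\<lambda>j. y j + z j)
      \<le> (\<integral>g. sup_pairing m T (contraction n a g y) + sup_pairing m T (contraction n a g z) \<partial>\<gamma>)"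
    unfolding betaAT_eq_integral
    by (intro integral_mono integrable_sup_pairing_contraction Bochner_Integration.integrable_add)
       (simp add: contraction_add sup_pairing_add)
  also have "\<dots> = \<beta> y + \<beta> z"
    unfolding betaAT_eq_integral
    by (intro Bochner_Integration.integral_add integrable_sup_pairing_contraction)
  finally show ?thesis .
qed

lemma betaAT_scale: "\<beta> (\<lambda>j. r * y j) = \<bar>r\<bar> * \<beta> y"
  unfolding betaAT_eq_integral contraction_scale sup_pairing_scale by simp

lemma betaAT_cong: "(\<And>j. j < n \<Longrightarrow> y j = z j) \<Longrightarrow> \<beta> y = \<beta> z"
  unfolding betaAT_eq_integral by (simp cong: contraction_cong)

lemma betaAT_diff_le: "\<beta> (x - y) \<le> \<beta> x + \<beta> y"
  using betaAT_add[of x "\<lambda>j. - y j"] betaAT_scale[of "-1" y] by (simp add: fun_diff_def)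

lemma betaAT_triangle: "\<beta> (x - z) \<le> \<beta> (x - y) + \<beta> (y - z)"
  using betaAT_add[of "x - y" "y - z"] by (simp add: fun_diff_def)

lemma betaAT_commute: "\<beta> (x - y) = \<beta> (y - x)"
  using betaAT_scale[of "-1" "x - y"] by (simp add: fun_diff_def)

lemma betaAT_sum: "finite J \<Longrightarrow> \<beta> (\<lambda>i. \<Sum>j\<in>J. f j i) \<le> (\<Sum>j\<in>J. \<beta> (f j))"
proof (induction J rule: finite_induct)
  case empty
  then show ?case using betaAT_scale[of 0 "\<lambda>_. 0"] by simp
next
  case (insert j J)
  then show ?case using betaAT_add[of "f j" "\<lambda>i. \<Sum>j\<in>J. f j i"] by simp
qed

lemma betaAT_le_coordinates: "\<beta> y \<le> (\<Sum>j<n. \<bar>y j\<bar> * \<beta> (\<lambda>i. of_bool (i = j)))"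
proof -
  have "\<beta> y = \<beta> (\<lambda>i. \<Sum>j<n. y j * of_bool (i = j))"
    by (rule betaAT_cong) simp
  also have "\<dots> \<le> (\<Sum>j<n. \<beta> (\<lambda>i. y j * of_bool (i = j)))"
    by (rule betaAT_sum) simp
  finally show ?thesis
    by (simp add: betaAT_scale)
qed

lemma borel_measurable_betaAT[measurable]: "\<beta> \<in> borel_measurable \<gamma>"
proof -
  interpret sigma_finite_measure \<gamma>
    by (rule prob_space_imp_sigma_finite[OF prob_space_gauss_vec])
  have "(\<lambda>(y, g). sup_pairing m T (contraction n a g y)) \<in> borel_measurable (\<gamma> \<Otimes>\<^sub>M \<gamma>)"
    unfolding case_prod_beta contraction_def by measurable
  then show ?thesis
    unfolding betaAT_eq_integral[abs_def] by (rule borel_measurable_lebesgue_integral)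
qed

lemma integrable_betaAT: "integrable \<gamma> \<beta>"
proof (rule Bochner_Integration.integrable_bound)
  show "integrable \<gamma> (\<lambda>y. \<Sum>j<n. \<bar>y j\<bar> * \<beta> (\<lambda>i. of_bool (i = j)))"
    by (intro Bochner_Integration.integrable_sum Bochner_Integration.integrable_mult_left
        integrable_gauss_vec_abs_component) simp
  show "AE y in \<gamma>. norm (\<beta> y) \<le> norm (\<Sum>j<n. \<bar>y j\<bar> * \<beta> (\<lambda>i. of_bool (i = j)))"
    using betaAT_le_coordinates betaAT_nonneg by (intro AE_I2) (smt (verit) real_norm_def)
qed simp

lemma sAT_eq_integral_betaAT: "sA = (\<integral>y. \<beta> y \<partial>\<gamma>)"
proof -
  interpret pair_sigma_finite \<gamma> \<gamma>
    using prob_space_imp_sigma_finite[OF prob_space_gauss_vec] by (simp add: pair_sigma_finite_def)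
  have [measurable]:
    "(\<lambda>gg. sup_pairing m T (contraction n a (fst gg) (snd gg))) \<in> borel_measurable (\<gamma> \<Otimes>\<^sub>M \<gamma>)"
    unfolding contraction_def by measurable
  have "sA = enn2real (\<integral>\<^sup>+gg. sup_pairing m T (contraction n a (fst gg) (snd gg)) \<partial>(\<gamma> \<Otimes>\<^sub>M \<gamma>))"
    unfolding sAT_eq_integral by (rule integral_eq_nn_integral) (simp_all add: sup_pairing_nonneg)
  also have "(\<integral>\<^sup>+gg. sup_pairing m T (contraction n a (fst gg) (snd gg)) \<partial>(\<gamma> \<Otimes>\<^sub>M \<gamma>))
      = (\<integral>\<^sup>+y. (\<integral>\<^sup>+g. sup_pairing m T (contraction n a g y) \<partial>\<gamma>) \<partial>\<gamma>)"
    by (subst nn_integral_snd[symmetric]) simp_all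
  also have "\<dots> = (\<integral>\<^sup>+y. \<beta> y \<partial>\<gamma>)"
    unfolding betaAT_eq_integral
    by (intro nn_integral_cong nn_integral_eq_integral integrable_sup_pairing_contraction)
       (simp add: sup_pairing_nonneg)
  also have "enn2real \<dots> = (\<integral>y. \<beta> y \<partial>\<gamma>)"
    by (rule integral_eq_nn_integral[symmetric]) (simp_all add: betaAT_nonneg)
  finally show ?thesis .
qed

lemma sAT_nonneg: "0 \<le> sA"
  unfolding sAT_eq_integral_betaAT by (intro integral_nonneg_AE AE_I2 betaAT_nonneg)

end

section \<open>Dual Sudakov inequality and covering\<close>

context gauss_tensor
begin

lemma measure_betaAT_le_three_sAT: "2/3 \<le> measure \<gamma> {h \<in> space \<gamma>. \<beta> h \<le> 3 * sA}"
proof -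
  interpret prob_space \<gamma> by (rule prob_space_gauss_vec)
  have large_values: "measure \<gamma> {h \<in> space \<gamma>. 3 * sA < \<beta> h} \<le> 1/3"
  proof (cases "sA = 0")
    case True
    then have "AE h in \<gamma>. \<beta> h = 0"
      using integral_nonneg_eq_0_iff_AE[OF integrable_betaAT] betaAT_nonneg sAT_eq_integral_betaAT
      by simp
    then have "AE h in \<gamma>. \<not> 3 * sA < \<beta> h"
      by (rule eventually_mono) (simp add: True)
    then show ?thesis
      by (simp add: prob_eq_0_AE)
  next
    case False
    then have "0 < sA" using sAT_nonneg by simp
    have "measure \<gamma> {h \<in> space \<gamma>. 3 * sA < \<beta> h} \<le> measure \<gamma> {h \<in> space \<gamma>. 3 * sA \<le> \<beta> h}"
      by (intro finite_measure_mono) auto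
    also have "\<dots> \<le> (\<integral>h. \<beta> h \<partial>\<gamma>) / (3 * sA)"
      using \<open>0 < sA\<close> betaAT_nonneg
      by (intro integral_Markov_inequality_measure[OF integrable_betaAT, where A = "space \<gamma>"]) auto
    also have "\<dots> = 1/3"
      using \<open>0 < sA\<close> by (simp flip: sAT_eq_integral_betaAT)
    finally show ?thesis .
  qed
  have "{h \<in> space \<gamma>. \<beta> h \<le> 3 * sA} = space \<gamma> - {h \<in> space \<gamma>. 3 * sA < \<beta> h}"
    by auto
  then show ?thesis
    using large_values by (simp add: prob_compl)
qed

lemma card_separated_le:
  fixes P :: "(nat \<Rightarrow> real) set"
  assumes "0 < \<theta>" and "6 * sA \<le> \<theta> * \<delta>" and "finite P"
    and in_ball: "\<And>p. p \<in> P \<Longrightarrow> (\<Sum>j<n. (p j)\<^sup>2) \<le> 1"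
    and separated: "\<And>p q. p \<in> P \<Longrightarrow> q \<in> P \<Longrightarrow> p \<noteq> q \<Longrightarrow> \<delta> < \<beta> (p - q)"
  shows "real (card P) \<le> 3/2 * exp (\<theta>\<^sup>2 / 2)"
proof -
  define K where "K = {h \<in> space \<gamma>. \<beta> h \<le> 3 * sA}"
  define scale where "scale p j = \<theta> * p j" for p :: "nat \<Rightarrow> real" and j
  have "inj_on scale P"
    using \<open>0 < \<theta>\<close> by (auto simp: inj_on_def scale_def fun_eq_iff)
  then have card_scale: "card (scale ` P) = card P"
    by (rule card_image)
  have "real (card (scale ` P)) * exp (- \<theta>\<^sup>2 / 2) * measure \<gamma> K \<le> 1"
  proof (rule gauss_vec_translates_packing)
    show "finite (scale ` P)"
      using \<open>finite P\<close> by simp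
    show "K \<in> sets \<gamma>"
      unfolding K_def by measurable
    show "(\<Sum>i<n. (b i)\<^sup>2) \<le> \<theta>\<^sup>2" if "b \<in> scale ` P" for b
      using that in_ball
      by (auto simp: scale_def power_mult_distrib mult_left_le simp flip: sum_distrib_left)
    show "b = c"
      if "\<sigma> \<in> {-1, 1}" and "b \<in> scale ` P" "c \<in> scale ` P"
        and translates: "restrict (\<lambda>i. h i + \<sigma> * b i) {..<n} \<in> K"
          "restrict (\<lambda>i. h i + \<sigma> * c i) {..<n} \<in> K"
      for h \<sigma> b c
    proof -
      obtain p q where "p \<in> P" "q \<in> P" and bc: "b = scale p" "c = scale q"
        using \<open>b \<in> scale ` P\<close> \<open>c \<in> scale ` P\<close> by blast
      have "\<beta> (\<lambda>i. h i + \<sigma> * b i) \<le> 3 * sA" "\<beta> (\<lambda>i. h i + \<sigma> * c i) \<le> 3 * sA"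
        using translates betaAT_cong[of "restrict _ {..<n}"] by (auto simp: K_def)
      then have "\<beta> ((\<lambda>i. h i + \<sigma> * b i) - (\<lambda>i. h i + \<sigma> * c i)) \<le> \<theta> * \<delta>"
        using betaAT_diff_le[of "\<lambda>i. h i + \<sigma> * b i" "\<lambda>i. h i + \<sigma> * c i"] \<open>6 * sA \<le> \<theta> * \<delta>\<close>
        by linarith
      moreover have "(\<lambda>i. h i + \<sigma> * b i) - (\<lambda>i. h i + \<sigma> * c i) = (\<lambda>j. (\<sigma> * \<theta>) * (p - q) j)"
        by (simp add: bc scale_def fun_eq_iff algebra_simps)
      moreover have "\<bar>\<sigma> * \<theta>\<bar> = \<theta>"
        using \<open>\<sigma> \<in> {-1, 1}\<close> \<open>0 < \<theta>\<close> by (auto simp: abs_mult)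
      ultimately have "\<beta> (p - q) \<le> \<delta>"
        using \<open>0 < \<theta>\<close> by (simp add: betaAT_scale fun_diff_def)
      then show "b = c"
        using separated[OF \<open>p \<in> P\<close> \<open>q \<in> P\<close>] bc by force
    qed
  qed
  moreover have "real (card P) * exp (- \<theta>\<^sup>2 / 2) * (2/3) \<le> real (card P) * exp (- \<theta>\<^sup>2 / 2) * measure \<gamma> K"
    unfolding K_def by (intro mult_left_mono measure_betaAT_le_three_sAT) simp
  ultimately have "real (card P) * exp (- \<theta>\<^sup>2 / 2) * (2/3) \<le> 1"
    unfolding card_scale by linarith
  then show ?thesis
    by (simp add: exp_minus field_simps)
qed

end

lemma maximal_separated_net:
  fixes d :: "'a \<Rightarrow> 'a \<Rightarrow> real"
  assumes packing: "\<And>P. finite P \<Longrightarrow> P \<subseteq> U \<Longrightarrow> (\<forall>p\<in>P. \<forall>q\<in>P. p \<noteq> q \<longrightarrow> \<delta> < d p q)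
      \<Longrightarrow> real (card P) \<le> B"
    and refl: "\<And>x. d x x \<le> \<delta>" and sym: "\<And>x y. d x y = d y x"
  obtains P where "finite P" "P \<subseteq> U" "real (card P) \<le> B" "\<And>u. u \<in> U \<Longrightarrow> \<exists>p\<in>P. d u p \<le> \<delta>"
proof -
  define separated where
    "separated P \<longleftrightarrow> finite P \<and> P \<subseteq> U \<and> (\<forall>p\<in>P. \<forall>q\<in>P. p \<noteq> q \<longrightarrow> \<delta> < d p q)" for P
  have "card P < Suc (nat \<lfloor>B\<rfloor>)" if "separated P" for P
    using packing that by (simp add: separated_def le_nat_floor less_Suc_eq_le)
  moreover have "separated {}"
    by (simp add: separated_def)
  ultimately obtain P where "separated P" and maximal: "\<And>Q. separated Q \<Longrightarrow> card Q \<le> card P"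
    using Lattices_Big.ex_has_greatest_nat[of separated "{}" card] by metis
  have "\<exists>p\<in>P. d u p \<le> \<delta>" if "u \<in> U" for u
  proof (rule ccontr)
    assume far: "\<not> (\<exists>p\<in>P. d u p \<le> \<delta>)"
    then have "u \<notin> P" using refl by auto
    moreover have "separated (insert u P)"
      using \<open>separated P\<close> \<open>u \<in> U\<close> far sym by (auto simp: separated_def not_le)
    ultimately show False
      using maximal[of "insert u P"] \<open>separated P\<close> by (simp add: separated_def)
  qed
  then show ?thesis
    using that \<open>separated P\<close> packing by (auto simp: separated_def)
qed

lemma covering_from_packing:
  fixes d :: "'a \<Rightarrow> 'a \<Rightarrow> real"
  assumes packing: "\<And>P. finite P \<Longrightarrow> P \<subseteq> U \<Longrightarrow> (\<forall>p\<in>P. \<forall>q\<in>P. p \<noteq> q \<longrightarrow> \<delta> < d p q)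
      \<Longrightarrow> real (card P) \<le> B"
    and refl: "\<And>x. d x x \<le> \<delta>" and sym: "\<And>x y. d x y = d y x"
    and triangle: "\<And>x y z. d x z \<le> d x y + d y z"
  obtains N V where "real N \<le> B" "U = (\<Union>i\<in>{1..N}. V i)"
    "\<And>i x x'. i \<in> {1..N} \<Longrightarrow> x \<in> V i \<Longrightarrow> x' \<in> V i \<Longrightarrow> d x x' \<le> 2 * \<delta>"
proof -
  obtain P where "finite P" "P \<subseteq> U" "real (card P) \<le> B" and net: "\<And>u. u \<in> U \<Longrightarrow> \<exists>p\<in>P. d u p \<le> \<delta>"
    using maximal_separated_net[of U \<delta> d B] packing refl sym by blast
  obtain f where f: "bij_betw f {1..card P} P"
    using ex_bij_betw_nat_finite_1[OF \<open>finite P\<close>] by blast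
  define V where "V i = {u \<in> U. d u (f i) \<le> \<delta>}" for i
  have "U \<subseteq> (\<Union>i\<in>{1..card P}. V i)"
  proof
    fix u assume "u \<in> U"
    then obtain p where "p \<in> P" "d u p \<le> \<delta>"
      using net by blast
    moreover from \<open>p \<in> P\<close> obtain i where "i \<in> {1..card P}" "p = f i"
      using bij_betw_imp_surj_on[OF f] by blast
    ultimately show "u \<in> (\<Union>i\<in>{1..card P}. V i)"
      using \<open>u \<in> U\<close> by (auto simp: V_def)
  qed
  then have "U = (\<Union>i\<in>{1..card P}. V i)"
    by (auto simp: V_def)
  moreover have "d x x' \<le> 2 * \<delta>" if "x \<in> V i" "x' \<in> V i" for i x x'
    using that triangle[of x x' "f i"] sym[of x' "f i"] by (simp add: V_def)
  ultimately show ?thesis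
    using that \<open>real (card P) \<le> B\<close> by blast
qed

lemma nat_le_cube_of_le_three_halves:
  assumes "1 \<le> x" and "real N \<le> 3/2 * x"
  shows "real N \<le> x ^ 3"
proof (cases "N \<le> 1")
  case True
  then have "real N \<le> 1" by simp
  also have "1 \<le> x ^ 3" using \<open>1 \<le> x\<close> by (rule one_le_power)
  finally show ?thesis .
next
  case False
  then have "4/3 \<le> x" using assms(2) by linarith
  then have "3/2 \<le> x * x"
    using mult_mono[of "4/3" x "4/3" x] by simp
  then have "3/2 * x \<le> x ^ 3"
    using \<open>1 \<le> x\<close> mult_right_mono[of "3/2" "x * x" x] by (simp add: power3_eq_cube)
  then show ?thesis using assms(2) by linarith
qed

context gauss_tensor
begin

lemma betaAT_decomposition:
  assumes "0 < r" and U: "U \<subseteq> {x. (\<Sum>j<n. (x j)\<^sup>2) \<le> 1}"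
  obtains N V where "real N \<le> exp (216 * r)" "U = (\<Union>i\<in>{1..N}. V i)"
    "\<And>i x x'. i \<in> {1..N} \<Longrightarrow> x \<in> V i \<Longrightarrow> x' \<in> V i \<Longrightarrow> \<beta> (x - x') \<le> r powr (-1/2) * sA"
proof -
  define \<delta> where "\<delta> = r powr (-1/2) * sA / 2"
  have "6 * sA \<le> (12 * sqrt r) * \<delta>"
    using \<open>0 < r\<close> by (simp add: \<delta>_def powr_minus_divide powr_half_sqrt)
  then have packing: "real (card P) \<le> 3/2 * exp (72 * r)"
    if "finite P" "P \<subseteq> U" "\<forall>p\<in>P. \<forall>q\<in>P. p \<noteq> q \<longrightarrow> \<delta> < \<beta> (p - q)" for P
  proof -
    have "real (card P) \<le> 3/2 * exp ((12 * sqrt r)\<^sup>2 / 2)"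
      by (rule card_separated_le) (use that U \<open>0 < r\<close> \<open>6 * sA \<le> (12 * sqrt r) * \<delta>\<close> in auto)
    then show ?thesis
      using \<open>0 < r\<close> by (simp add: power_mult_distrib)
  qed
  have zero_dist: "\<beta> (x - x) \<le> \<delta>" for x
    using betaAT_scale[of 0 x] sAT_nonneg by (simp add: \<delta>_def fun_diff_def)
  obtain N V where N: "real N \<le> 3/2 * exp (72 * r)" and "U = (\<Union>i\<in>{1..N}. V i)"
    and diam: "\<And>i x x'. i \<in> {1..N} \<Longrightarrow> x \<in> V i \<Longrightarrow> x' \<in> V i \<Longrightarrow> \<beta> (x - x') \<le> 2 * \<delta>"
    using covering_from_packing[of U \<delta> "\<lambda>x y. \<beta> (x - y)", OF packing zero_dist
        betaAT_commute betaAT_triangle] by blast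
  moreover have "real N \<le> exp (216 * r)"
    using nat_le_cube_of_le_three_halves[of "exp (72 * r)" N] \<open>0 < r\<close> N
    by (simp add: exp_of_nat_mult[symmetric])
  ultimately show ?thesis
    using that diam by (simp add: \<delta>_def)
qed

end

theorem corollary5p7:
  shows "\<exists>C::real. \<forall>(n::nat) (m::nat) (a::nat \<Rightarrow> nat \<Rightarrow> nat \<Rightarrow> real)
      (T::(nat \<Rightarrow> real) set) (U::(nat \<Rightarrow> real) set) (r::real).
      T \<noteq> {} \<longrightarrow> T \<subseteq> {t. \<forall>k\<ge>m. t k = 0} \<longrightarrow> (\<exists>M. \<forall>t\<in>T. \<forall>k<m. \<bar>t k\<bar> \<le> M) \<longrightarrow>
      U \<subseteq> {x. (\<forall>j\<ge>n. x j = 0) \<and> (\<Sum>j<n. (x j)\<^sup>2) \<le> 1} \<longrightarrow> r > 0 \<longrightarrow>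
      (\<exists>(N::nat) (V::nat \<Rightarrow> (nat \<Rightarrow> real) set).
         real N \<le> exp (C * r) \<and> U = (\<Union>i\<in>{1..N}. V i) \<and>
         (\<forall>i\<in>{1..N}. \<forall>x\<in>V i. \<forall>x'\<in>V i.
            betaAT n m a T (x - x') \<le> r powr (-1/2) * sAT n m a T))"
proof (rule exI[of _ 216], intro allI impI)
  fix n m :: nat and a :: "nat \<Rightarrow> nat \<Rightarrow> nat \<Rightarrow> real" and T U :: "(nat \<Rightarrow> real) set" and r :: real
  assume "T \<noteq> {}" and "T \<subseteq> {t. \<forall>k\<ge>m. t k = 0}" and "\<exists>M. \<forall>t\<in>T. \<forall>k<m. \<bar>t k\<bar> \<le> M"
    and U: "U \<subseteq> {x. (\<forall>j\<ge>n. x j = 0) \<and> (\<Sum>j<n. (x j)\<^sup>2) \<le> 1}" and "r > 0"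
  then obtain M where "\<forall>t\<in>T. \<forall>k<m. \<bar>t k\<bar> \<le> M" by blast
  then interpret gauss_tensor m T "max M 0" n a
    using \<open>T \<noteq> {}\<close> by unfold_locales force+
  have "U \<subseteq> {x. (\<Sum>j<n. (x j)\<^sup>2) \<le> 1}"
    using U by blast
  then obtain N V where "real N \<le> exp (216 * r)" "U = (\<Union>i\<in>{1..N}. V i)"
    "\<And>i x x'. i \<in> {1..N} \<Longrightarrow> x \<in> V i \<Longrightarrow> x' \<in> V i \<Longrightarrow> \<beta> (x - x') \<le> r powr (-1/2) * sA"
    using betaAT_decomposition \<open>r > 0\<close> by metis
  then show "\<exists>N V. real N \<le> exp (216 * r) \<and> U = (\<Union>i\<in>{1..N}. V i) \<and>
      (\<forall>i\<in>{1..N}. \<forall>x\<in>V i. \<forall>x'\<in>V i. \<beta> (x - x') \<le> r powr (-1/2) * sA)"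
    by blast
qed

end
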